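(* Let $n\ge 2$ be an integer and let $\mathbf{q}$ be an indeterminate. Let $H$ be the $\mathbb{Z}[\mathbf{q}]$-algebra with generators $T_1,T_2,\dots,T_{n-1}$ and relations $(T_i+1)(T_i-\mathbf{q})=0$ for $i\in[1,n-1]$, $T_iT_{i+1}T_i=T_{i+1}T_iT_{i+1}$ for $i\in[1,n-2]$, and $T_iT_j=T_jT_i$ for $i\ne j$ in $[1,n-1]$ (the Hecke algebra of type $A_{n-1}$). Set $$\tau=T_1T_2\cdots T_{n-1}+T_2T_3\cdots T_{n-1}+\dots+T_{n-2}T_{n-1}+T_{n-1}+1\in H.$$ Then the following equality holds in $H$: $$\tau\prod_{k\in[1,n],\,k\ne n-1}\bigl(\tau-1-\mathbf{q}-\mathbf{q}^2-\dots-\mathbf{q}^{k-1}\bigr)=0.$$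
   Context: For integers $a,b$, $[a,b]$ denotes the set of integers $c$ with $a\le c\le b$. The factors in the product commute since they are polynomials in $\tau$. *)

theory Defs
  imports Main
begin

definition hecke_tau :: "nat \<Rightarrow> (nat \<Rightarrow> 'a::ring_1) \<Rightarrow> 'a" where
  "hecke_tau n T = (\<Sum>j=1..n. prod_list (map T [j..<n]))"

end

theory Submission
  imports Defs
begin

text \<open>Write \<open>\<tau> m\<close> for \<open>hecke_tau m T\<close>, so \<open>\<tau> (m+1) = \<tau> m * T m + 1\<close>. The braid and quadratic
  relations give \<open>\<tau> (m+1) * \<tau> m * (T m - q) = 0\<close>. As \<open>\<tau> (m+1) = (1 + q \<tau> m) + \<tau> m (T m - q)\<close>,
  this allows replacing \<open>\<tau> (m+1)\<close> by \<open>1 + q \<tau> m\<close> in any polynomial with central coefficients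
  that is multiplied by \<open>\<tau> (m+1)\<close> on the left. With \<open>[k] = 1 + q + \<dots> + q^(k-1)\<close> we have
  \<open>1 + q \<tau> m - [k+1] = q (\<tau> m - [k])\<close>, so the product for \<open>\<tau> (m+1)\<close> becomes a power of \<open>q\<close>
  times the product for \<open>\<tau> m\<close>, the factor for \<open>k = 1\<close> turning into \<open>q \<tau> m\<close>. Induction on \<open>m\<close>
  starts from \<open>(T 1 + 1)(T 1 - q) = 0\<close>.\<close>

lemma hecke_tau_0 [simp]: "hecke_tau 0 T = 0"
  by (simp add: hecke_tau_def)

lemma hecke_tau_Suc: "hecke_tau (Suc m) T = hecke_tau m T * T m + 1"
proof -
  have "(\<Sum>j=1..m. prod_list (map T [j..<Suc m])) = (\<Sum>j=1..m. prod_list (map T [j..<m]) * T m)"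
    by (rule sum.cong) auto
  then show ?thesis
    by (simp add: hecke_tau_def sum_distrib_right)
qed

lemma sum_powers_lessThan_Suc:
  "(\<Sum>i<Suc k. (x::'a::semiring_1) ^ i) = 1 + x * (\<Sum>i<k. x ^ i)"
  unfolding sum.lessThan_Suc_shift by (simp add: sum_distrib_left)

lemma prod_list_map_central_mult:
  fixes q :: "'a::monoid_mult"
  assumes "\<And>z. q * z = z * q"
  shows "prod_list (map (\<lambda>k. q * g k) L) = q ^ length L * prod_list (map g L)"
proof (induction L)
  case Nil
  then show ?case by simp
next
  case (Cons a L)
  have "prod_list (map (\<lambda>k. q * g k) (a # L)) = q * (g a * q ^ length L) * prod_list (map g L)"
    using Cons.IH by (simp add: mult.assoc)
  also have "\<dots> = q * (q ^ length L * g a) * prod_list (map g L)"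
    by (simp add: power_commuting_commutes[OF assms])
  also have "\<dots> = q ^ length (a # L) * prod_list (map g (a # L))"
    by (simp add: mult.assoc)
  finally show ?case .
qed

lemma affine_commute:
  fixes a b u s :: "'a::ring_1"
  assumes u: "\<And>z. u * z = z * u" and s: "\<And>z. s * z = z * s" and ab: "a * b = b * a"
  shows "(u + s * a) * b = b * (u + s * a)"
proof -
  have "(u + s * a) * b = u * b + s * (a * b)"
    by (simp add: distrib_right mult.assoc)
  also have "\<dots> = b * u + b * a * s"
    by (simp only: u s ab)
  also have "\<dots> = b * (u + s * a)"
    by (simp add: distrib_left mult.assoc s)
  finally show ?thesis .
qed

lemma left_mult_prod_affine_eq:
  fixes x a b :: "'a::ring_1"
  assumes powers: "\<And>k. x * a ^ k = x * b ^ k"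
    and u: "\<And>i z. u i * z = z * u i" and s: "\<And>i z. s i * z = z * s i"
  shows "x * a ^ k * prod_list (map (\<lambda>i. u i + s i * a) L)
       = x * b ^ k * prod_list (map (\<lambda>i. u i + s i * b) L)"
proof (induction L arbitrary: k)
  case Nil
  then show ?case using powers by simp
next
  case (Cons i L)
  have expand: "x * z ^ k * ((u i + s i * z) * P) = u i * (x * z ^ k * P) + s i * (x * z ^ Suc k * P)"
    for z P
  proof -
    have "x * z ^ k * ((u i + s i * z) * P) = (x * z ^ k * u i) * P + (x * z ^ k * s i) * z * P"
      by (simp add: distrib_left distrib_right mult.assoc)
    also have "\<dots> = u i * (x * z ^ k) * P + s i * (x * z ^ k) * z * P"
      by (simp only: u[symmetric] s[symmetric])
    finally show ?thesis
      by (simp add: mult.assoc power_Suc2 del: power_Suc)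
  qed
  show ?case
    by (simp add: expand Cons.IH del: power_Suc)
qed

lemma left_mult_power_affine_eq:
  fixes x a b :: "'a::ring_1"
  assumes "\<And>k. x * a ^ k = x * b ^ k" and "\<And>z. u * z = z * u" and "\<And>z. s * z = z * s"
  shows "x * (u + s * a) ^ j = x * (u + s * b) ^ j"
  using left_mult_prod_affine_eq[of x a b "\<lambda>_. u" "\<lambda>_. s" 0 "replicate j ()"] assms
  by simp

lemma left_mult_prod_linear_eq:
  fixes x a b :: "'a::ring_1"
  assumes "\<And>k. x * a ^ k = x * b ^ k" and "\<And>i z. c i * z = z * c i"
  shows "x * prod_list (map (\<lambda>i. a - c i) L) = x * prod_list (map (\<lambda>i. b - c i) L)"
  using left_mult_prod_affine_eq[of x a b "\<lambda>i. - c i" "\<lambda>_. 1" 0 L] assms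
  by simp

lemma left_powers_eq_if_absorbs:
  fixes x w d :: "'a::ring_1"
  assumes "x = w + d" and absorbs: "\<And>j. x * w ^ j * d = 0"
  shows "x * x ^ k = x * w ^ k"
proof -
  have "x * w ^ j * x ^ k = x * w ^ (j + k)" for j
  proof (induction k arbitrary: j)
    case 0
    then show ?case by simp
  next
    case (Suc k)
    have absorb_step: "x * w ^ j * x = x * w ^ Suc j"
    proof -
      have "x * w ^ j * x = x * w ^ j * (w + d)"
        using assms(1) by simp
      also have "\<dots> = x * w ^ Suc j"
        using absorbs[of j] by (simp add: distrib_left mult.assoc power_Suc2 del: power_Suc)
      finally show ?thesis .
    qed
    have "x * w ^ j * x ^ Suc k = x * w ^ j * x * x ^ k"
      by (simp add: mult.assoc)
    also have "\<dots> = x * w ^ Suc j * x ^ k"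
      by (simp only: absorb_step)
    also have "\<dots> = x * w ^ (j + Suc k)"
      by (simp only: Suc.IH) simp
    finally show ?case .
  qed
  from this[of 0] show ?thesis by simp
qed

lemma filter_upt_neq_Suc:
  assumes "2 \<le> m"
  shows "filter (\<lambda>k. k \<noteq> m) [1..<m + 2] = 1 # map Suc (filter (\<lambda>k. k \<noteq> m - 1) [1..<m + 1])"
proof -
  have "[1..<m + 2] = 1 # map Suc [1..<m + 1]"
    by (simp add: upt_conv_Cons map_Suc_upt del: upt_Suc)
  moreover have "(\<lambda>k. k \<noteq> m) \<circ> Suc = (\<lambda>k. k \<noteq> m - 1)"
    using assms by auto
  ultimately show ?thesis
    using assms by (simp only: filter.simps filter_map) simp
qed

locale hecke_relations =
  fixes n :: nat and q :: "'a::ring_1" and T :: "nat \<Rightarrow> 'a"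
  assumes q_central: "\<forall>x. q * x = x * q"
    and quad: "\<forall>i\<in>{1..n-1}. (T i + 1) * (T i - q) = 0"
    and braid: "\<forall>i\<in>{1..n-2}. T i * T (i+1) * T i = T (i+1) * T i * T (i+1)"
    and comm: "\<forall>i\<in>{1..n-1}. \<forall>j\<in>{1..n-1}. (i + 1 < j \<or> j + 1 < i) \<longrightarrow> T i * T j = T j * T i"
begin

abbreviation tau :: "nat \<Rightarrow> 'a" where
  "tau m \<equiv> hecke_tau m T"

lemma q_commute: "q * z = z * q"
  using q_central by blast

lemma sum_q_powers_commute: "(\<Sum>i<k. q ^ i) * z = z * (\<Sum>i<k. q ^ i)"
  by (simp add: sum_distrib_left sum_distrib_right power_commuting_commutes[OF q_commute])

lemma T_mult_T_minus_q:
  assumes "1 \<le> i" "i \<le> n - 1"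
  shows "T i * (T i - q) = - (T i - q)"
proof -
  have "T i * (T i - q) + (T i - q) = (T i + 1) * (T i - q)"
    by (simp add: distrib_right)
  also have "\<dots> = 0"
    using quad assms by auto
  finally show ?thesis
    by (simp only: eq_neg_iff_add_eq_0)
qed

lemma tau_commute_T:
  assumes "m < i" "i \<le> n - 1"
  shows "tau m * T i = T i * tau m"
  using assms(1)
proof (induction m)
  case 0
  then show ?case by simp
next
  case (Suc m)
  show ?case
  proof (cases "m = 0")
    case True
    then show ?thesis by (simp add: hecke_tau_Suc)
  next
    case False
    have "T m * T i = T i * T m"
      using comm False Suc.prems assms(2) by auto
    then show ?thesis
      using Suc by (simp add: hecke_tau_Suc algebra_simps) (metis mult.assoc)
  qed
qed

lemma tau_Suc_tau_T_minus_q_eq_0: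
  assumes "1 \<le> m" "m \<le> n - 1"
  shows "tau (Suc m) * tau m * (T m - q) = 0"
  using assms
proof (induction m)
  case 0
  then show ?case by simp
next
  case (Suc m)
  show ?case
  proof (cases "m = 0")
    case True
    then show ?thesis using quad Suc.prems by (simp add: hecke_tau_Suc)
  next
    case False
    define a R S D where "a = tau m" and "R = T m" and "S = T (Suc m)" and "D = S - q"
    have IH: "(a * R + 1) * a * (R - q) = 0"
      using Suc False by (simp add: a_def R_def hecke_tau_Suc)
    have Sa: "S * a = a * S"
      using tau_commute_T[of m "Suc m"] Suc.prems by (simp add: a_def S_def)
    have SD: "S * D = - D"
      using T_mult_T_minus_q[of "Suc m"] Suc.prems by (simp add: S_def D_def)
    have "S * R * S = R * S * R"
      using braid Suc.prems False by (auto simp: S_def R_def)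
    then have SRD: "S * R * D = (R - q) * S * R"
      by (simp add: D_def right_diff_distrib left_diff_distrib q_commute[of "S * R"] mult.assoc)
    have "tau (Suc (Suc m)) * tau (Suc m) * (T (Suc m) - q) = ((a * R + 1) * S + 1) * (a * R + 1) * D"
      by (simp add: hecke_tau_Suc a_def R_def S_def D_def)
    also have "\<dots> = a * R * (S * a) * R * D + a * R * (S * D) + (S * a) * R * D + (S * D + D) + a * R * D"
      by (simp add: algebra_simps)
    also have "\<dots> = a * R * a * (S * R * D) + a * (S * R * D)"
      by (simp add: Sa SD algebra_simps)
    also have "\<dots> = a * R * a * ((R - q) * S * R) + a * ((R - q) * S * R)"
      by (simp only: SRD)
    also have "\<dots> = ((a * R + 1) * a * (R - q)) * (S * R)"
      by (simp add: algebra_simps)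
    also have "\<dots> = 0"
      by (simp add: IH)
    finally show ?thesis .
  qed
qed

lemma tau_Suc_mult_power:
  assumes "m \<le> n - 1"
  shows "tau (Suc m) * tau (Suc m) ^ k = tau (Suc m) * (1 + q * tau m) ^ k"
  using assms
proof (induction m arbitrary: k)
  case 0
  then show ?case by (simp add: hecke_tau_Suc)
next
  case (Suc m)
  define x y v D w where "x = tau (Suc (Suc m))" and "y = tau (Suc m)" and "v = tau m"
    and "D = T (Suc m) - q" and "w = 1 + q * y"
  have IH: "y * y ^ k = y * (1 + q * v) ^ k" for k
    using Suc by (simp add: y_def v_def)
  have "x = y * T (Suc m) + 1"
    unfolding x_def y_def by (rule hecke_tau_Suc)
  also have "\<dots> = w + y * D"
    by (simp add: w_def D_def algebra_simps q_commute[of y])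
  finally have decomp: "x = w + y * D" .
  have absorbs: "x * w ^ j * (y * D) = 0" for j
  proof -
    define u where "u = 1 + q * (1 + q * v)"
    have "w * y = y * w"
      unfolding w_def by (rule affine_commute) (simp_all add: q_commute)
    then have "w ^ j * y = y * w ^ j"
      by (rule power_commuting_commutes)
    also have "\<dots> = y * u ^ j"
      unfolding w_def u_def
      by (rule left_mult_power_affine_eq[OF IH]) (simp_all add: q_commute)
    finally have wy: "w ^ j * y = y * u ^ j" .
    have "v * T (Suc m) = T (Suc m) * v"
      using tau_commute_T[of m "Suc m"] Suc.prems by (simp add: v_def)
    then have "u * T (Suc m) = T (Suc m) * u"
      unfolding u_def by (intro affine_commute) (simp_all add: q_commute)
    then have "u * D = D * u"
      by (simp add: D_def right_diff_distrib left_diff_distrib q_commute)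
    then have uD: "u ^ j * D = D * u ^ j"
      by (rule power_commuting_commutes)
    have "x * w ^ j * (y * D) = x * (w ^ j * y) * D"
      by (simp add: mult.assoc)
    also have "\<dots> = x * y * D * u ^ j"
      by (simp add: wy uD mult.assoc)
    also have "\<dots> = 0"
      using tau_Suc_tau_T_minus_q_eq_0[of "Suc m"] Suc.prems by (simp add: x_def y_def D_def)
    finally show ?thesis .
  qed
  show ?case
    using left_powers_eq_if_absorbs[OF decomp absorbs] by (simp add: x_def y_def w_def)
qed

lemma tau_mult_prod_eq_0:
  assumes "2 \<le> m" "m \<le> n"
  shows "tau m * prod_list (map (\<lambda>k. tau m - (\<Sum>i<k. q ^ i)) (filter (\<lambda>k. k \<noteq> m - 1) [1..<m+1])) = 0"
  using assms
proof (induction m rule: nat_induct_at_least)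
  case base
  have "(T 1 + 1) * (T 1 - q) = 0"
    using quad base by auto
  then show ?case
    by (simp add: upt_rec numeral_2_eq_2 hecke_tau_Suc algebra_simps)
next
  case (Suc m)
  define c x Y w R where "c = (\<lambda>k. \<Sum>i<k. q ^ i)" and "x = tau (Suc m)" and "Y = tau m"
    and "w = 1 + q * Y" and "R = filter (\<lambda>k. k \<noteq> m - 1) [1..<m+1]"
  have IH: "Y * prod_list (map (\<lambda>k. Y - c k) R) = 0"
    using Suc by (simp add: Y_def c_def R_def)
  have roots: "filter (\<lambda>k. k \<noteq> Suc m - 1) [1..<Suc m + 1] = 1 # map Suc R"
    using filter_upt_neq_Suc[OF Suc.hyps] by (simp add: R_def)
  have powers: "x * x ^ k = x * w ^ k" for k
    using tau_Suc_mult_power[of m] Suc.prems by (simp add: x_def w_def Y_def)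
  have shift: "w - c (Suc k) = q * (Y - c k)" for k
    unfolding c_def sum_powers_lessThan_Suc by (simp add: w_def right_diff_distrib)
  have c_0: "c 0 = 0"
    by (simp add: c_def)
  have "x * prod_list (map (\<lambda>k. x - c k) (1 # map Suc R))
      = x * prod_list (map (\<lambda>k. w - c k) (1 # map Suc R))"
    by (rule left_mult_prod_linear_eq[OF powers]) (simp add: c_def sum_q_powers_commute)
  also have "\<dots> = x * (q * Y * prod_list (map (\<lambda>k. q * (Y - c k)) R))"
    by (simp add: shift c_0 o_def)
  also have "\<dots> = x * (q * (Y * q ^ length R) * prod_list (map (\<lambda>k. Y - c k) R))"
    by (simp add: prod_list_map_central_mult[OF q_commute] mult.assoc)
  also have "\<dots> = x * q ^ Suc (length R) * (Y * prod_list (map (\<lambda>k. Y - c k) R))"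
    by (simp add: power_commuting_commutes[OF q_commute] mult.assoc)
  also have "\<dots> = 0"
    by (simp add: IH)
  finally show ?case
    by (simp only: roots x_def c_def)
qed

end

theorem proposition2:
  fixes n :: nat and q :: "'a::ring_1" and T :: "nat \<Rightarrow> 'a"
  assumes "n \<ge> 2"
    and q_central: "\<forall>x. q * x = x * q"
    and quad: "\<forall>i\<in>{1..n-1}. (T i + 1) * (T i - q) = 0"
    and braid: "\<forall>i\<in>{1..n-2}. T i * T (i+1) * T i = T (i+1) * T i * T (i+1)"
    and comm: "\<forall>i\<in>{1..n-1}. \<forall>j\<in>{1..n-1}. (i + 1 < j \<or> j + 1 < i) \<longrightarrow> T i * T j = T j * T i"
  shows "hecke_tau n T *
           prod_list (map (\<lambda>k. hecke_tau n T - (\<Sum>i<k. q ^ i))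
                          (filter (\<lambda>k. k \<noteq> n - 1) [1..<n+1])) = 0"
proof -
  interpret hecke_relations n q T
    using q_central quad braid comm by unfold_locales
  show ?thesis
    using tau_mult_prod_eq_0[of n] assms(1) by simp
qed

end
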